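(* Let $\mathfrak{S}$ be a labelled sequent. Any label phase started on $\mathfrak{S}$ terminates and yields a finite derivation (with root $\mathfrak{S}$) whose leaves are label saturated.
   Context: Formulas: fix a countable set $\mathtt{Prop}$ of propositional atoms; formulas are generated by $A ::= \bot \mid p \mid A \to A \mid \Box A \mid \triangle A$ with $p \in \mathtt{Prop}$. Labelled sequents: fix a countable set $\mathtt{Lab}$ of labels. A labelled formula is $x:A$ with $x\in\mathtt{Lab}$ and $A$ a formula; a relational atom is $xRy$ or $xSy$ with $x,y \in \mathtt{Lab}$. A sequent $\mathcal{R},\Gamma\Rightarrow\Omega$ consists of a finite multiset $\mathcal{R}$ of relational atoms and finite multisets $\Gamma,\Omega$ of labelled formulas; commas denote multiset union. Rules used (premiss above, conclusion below): ($\Box$R) from $\mathcal{R},xRy,\Gamma\Rightarrow y:A,\Omega$ infer $\mathcal{R},\Gamma\Rightarrow x:\Box A,\Omega$, provided $y$ does not occur in the conclusion; ($\triangle$R) from $\mathcal{R},xSy,\Gamma\Rightarrow y:A,\Omega$ infer $\mathcal{R},\Gamma\Rightarrow x:\triangle A,\Omega$, provided $y$ does not occur in the conclusion. Label phase: starting from a sequent, repeatedly apply the rules $\Box$R and $\triangle$R bottom-up to the leaves for as long as possible. A sequent is label saturated if neither $\Box$R nor $\triangle$R can be applied to it, i.e. its succedent $\Omega$ contains no labelled formula of the form $x:\Box A$ or $x:\triangle A$. *)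

theory Defs
  imports Main "HOL-Library.Multiset"
begin

type_synonym patom = nat
type_synonym label = nat

datatype form = Bot | At patom | Imp form form | Box form | Tri form

datatype relatom = RelR label label | RelS label label

type_synonym lform = "label \<times> form"

text \<open>A labelled sequent  R, Gamma => Omega  as a triple of finite multisets.\<close>
type_synonym sequent = "relatom multiset \<times> lform multiset \<times> lform multiset"

fun rlabels :: "relatom \<Rightarrow> label set" where
  "rlabels (RelR x y) = {x, y}"
| "rlabels (RelS x y) = {x, y}"

fun seq_labels :: "sequent \<Rightarrow> label set" where
  "seq_labels (Rs, G, Om) =
     (\<Union>r\<in>set_mset Rs. rlabels r) \<union> fst ` set_mset G \<union> fst ` set_mset Om"

text \<open>One bottom-up application of BoxR or TriR: label_step S P holds
  iff P is the premiss of an instance of BoxR or TriR whose conclusion is S.\<close>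
definition label_step :: "sequent \<Rightarrow> sequent \<Rightarrow> bool" where
  "label_step S P \<longleftrightarrow>
     (\<exists>Rs G Om0 x A y.
        y \<notin> seq_labels S \<and>
        ((S = (Rs, G, add_mset (x, Box A) Om0) \<and>
          P = (add_mset (RelR x y) Rs, G, add_mset (y, A) Om0)) \<or>
         (S = (Rs, G, add_mset (x, Tri A) Om0) \<and>
          P = (add_mset (RelS x y) Rs, G, add_mset (y, A) Om0))))"

fun label_saturated :: "sequent \<Rightarrow> bool" where
  "label_saturated (Rs, G, Om) \<longleftrightarrow> (\<forall>x A. (x, Box A) \<notin># Om \<and> (x, Tri A) \<notin># Om)"

definition label_run :: "sequent \<Rightarrow> sequent list \<Rightarrow> bool" where
  "label_run S ss \<longleftrightarrow> ss \<noteq> [] \<and> hd ss = S \<and>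
     (\<forall>i. Suc i < length ss \<longrightarrow> label_step (ss ! i) (ss ! Suc i))"

definition maximal_label_run :: "sequent \<Rightarrow> sequent list \<Rightarrow> bool" where
  "maximal_label_run S ss \<longleftrightarrow> label_run S ss \<and> (\<nexists>P. label_step (last ss) P)"

end

theory Submission
  imports Defs
begin

text \<open>Each step of the label phase replaces a succedent formula x:\<box>A or x:\<triangle>A by
  y:A, so the total size of the succedent formulas strictly decreases; hence no run is
  infinite and maximal runs exist. A run can only stop at a saturated sequent, because the
  labels of a sequent are finitely many and a fresh label is always available.\<close>

definition succedent_size :: "sequent \<Rightarrow> nat" where
  "succedent_size S = sum_mset (image_mset (size \<circ> snd) (snd (snd S)))"

lemma label_step_succedent_size_less:
  "label_step S P \<Longrightarrow> succedent_size P < succedent_size S"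
  unfolding label_step_def succedent_size_def by auto

lemma wf_label_step: "wf {(P, S). label_step S P}"
  by (rule wf_subset[OF wf_measure[of succedent_size]])
     (auto simp: label_step_succedent_size_less)

lemma finite_seq_labels: "finite (seq_labels S)"
proof -
  obtain Rs G Om where "S = (Rs, G, Om)" by (cases S)
  moreover have "finite (rlabels r)" for r by (cases r) auto
  ultimately show ?thesis by auto
qed

lemma ex_label_step_if_not_saturated:
  assumes "\<not> label_saturated S"
  shows "\<exists>P. label_step S P"
proof -
  obtain Rs G Om where S: "S = (Rs, G, Om)" by (cases S)
  obtain y where y: "y \<notin> seq_labels S"
    using ex_new_if_finite[OF infinite_UNIV_nat finite_seq_labels] by blast
  from assms S obtain x A where "(x, Box A) \<in># Om \<or> (x, Tri A) \<in># Om" by auto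
  then show ?thesis
  proof
    assume "(x, Box A) \<in># Om"
    then have "S = (Rs, G, add_mset (x, Box A) (Om - {#(x, Box A)#}))" using S by simp
    then show ?thesis unfolding label_step_def using y by blast
  next
    assume "(x, Tri A) \<in># Om"
    then have "S = (Rs, G, add_mset (x, Tri A) (Om - {#(x, Tri A)#}))" using S by simp
    then show ?thesis unfolding label_step_def using y by blast
  qed
qed

lemma label_run_Cons:
  assumes "label_step S P" and "label_run P ss"
  shows "label_run S (S # ss)"
  unfolding label_run_def
proof (intro conjI allI impI)
  fix i assume "Suc i < length (S # ss)"
  then show "label_step ((S # ss) ! i) ((S # ss) ! Suc i)"
    using assms unfolding label_run_def by (cases i) (auto simp: hd_conv_nth)
qed simp_all

lemma ex_maximal_label_run: "\<exists>ss. maximal_label_run S ss"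
proof (induction S rule: wf_induct_rule[OF wf_label_step])
  case (1 S)
  show ?case
  proof (cases "\<exists>P. label_step S P")
    case False
    then have "maximal_label_run S [S]"
      unfolding maximal_label_run_def label_run_def by auto
    then show ?thesis by blast
  next
    case True
    then obtain P where step: "label_step S P" by blast
    with "1" obtain ss where "maximal_label_run P ss" by blast
    with step have "maximal_label_run S (S # ss)"
      unfolding maximal_label_run_def using label_run_Cons
      by (metis label_run_def last_ConsR)
    then show ?thesis by blast
  qed
qed

theorem lemma3:
  fixes S :: sequent
  shows "(\<nexists>f :: nat \<Rightarrow> sequent. f 0 = S \<and> (\<forall>i. label_step (f i) (f (Suc i))))
       \<and> (\<exists>ss. maximal_label_run S ss)
       \<and> (\<forall>ss. maximal_label_run S ss \<longrightarrow> label_saturated (last ss))"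
proof (intro conjI allI impI)
  show "\<nexists>f :: nat \<Rightarrow> sequent. f 0 = S \<and> (\<forall>i. label_step (f i) (f (Suc i)))"
    using wf_label_step unfolding wf_iff_no_infinite_down_chain by auto
  show "\<exists>ss. maximal_label_run S ss" by (rule ex_maximal_label_run)
  fix ss assume "maximal_label_run S ss"
  then show "label_saturated (last ss)"
    unfolding maximal_label_run_def using ex_label_step_if_not_saturated by blast
qed

end
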